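(* For $n\ge2$, the DFA $\mathcal W_n$ defined below is minimal, accepts a two-sided ideal, and its transition semigroup has size $n^{n-2}+(n-2)2^{n-2}+1$.
   Context: $Q_n=\{0,\dots,n-1\}$. Notation: $(p\to q)$ maps $p$ to $q$ and fixes other states; $(p_0,\dots,p_{k-1})$ is the cyclic permutation $p_0\mapsto\cdots\mapsto p_{k-1}\mapsto p_0$ fixing other states; $\mathbf 1$ is the identity; $(1\to2)(0\to1)$ is the map $0\mapsto1,1\mapsto2,2\mapsto2$. For $n\ge4$, $\mathcal W_n$ has states $Q_n$, initial $0$, final $\{n-1\}$, alphabet $\{a,b,c,d,e,f\}$, where $a\colon(1,2,\dots,n-2)$, $b\colon(1,2)$, $c\colon(n-2\to1)$, $d\colon(n-2\to0)$, $e$ maps each state of $\{0,\dots,n-2\}$ to $1$ and fixes $n-1$, and $f\colon(1\to n-1)$ (for $n=4$, $a$ and $b$ coincide). $\mathcal W_3$ has states $Q_3$, initial $0$, final $\{2\}$, alphabet $\{a,b,c\}$, $a\colon(1\to2)(0\to1)$, $b\colon(1\to0)$, $c\colon\mathbf 1$. $\mathcal W_2$ has states $Q_2$, initial $0$, final $\{1\}$, alphabet $\{a,b\}$, $a\colon(0\to1)$, $b\colon\mathbf 1$. A two-sided ideal is a nonempty $L$ with $L=\Sigma^*L\Sigma^*$. The transition semigroup is the set of state transformations induced by nonempty words. *)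

theory Defs
  imports Main
begin

definition words :: "'s set \<Rightarrow> 's list set" where
  "words S = lists S"

fun delta_star :: "('s \<Rightarrow> 'q \<Rightarrow> 'q) \<Rightarrow> 'q \<Rightarrow> 's list \<Rightarrow> 'q" where
  "delta_star delta q [] = q"
| "delta_star delta q (x # w) = delta_star delta (delta x q) w"

definition dfa_lang :: "'s set \<Rightarrow> ('s \<Rightarrow> 'q \<Rightarrow> 'q) \<Rightarrow> 'q \<Rightarrow> 'q set \<Rightarrow> 's list set" where
  "dfa_lang S delta q0 F = {w \<in> words S. delta_star delta q0 w \<in> F}"

definition dfa_minimal ::
  "'q set \<Rightarrow> 's set \<Rightarrow> ('s \<Rightarrow> 'q \<Rightarrow> 'q) \<Rightarrow> 'q \<Rightarrow> 'q set \<Rightarrow> bool" where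
  "dfa_minimal Q S delta q0 F \<longleftrightarrow>
     (\<forall>q\<in>Q. \<exists>w\<in>words S. delta_star delta q0 w = q) \<and>
     (\<forall>p\<in>Q. \<forall>q\<in>Q. p \<noteq> q \<longrightarrow>
        (\<exists>w\<in>words S. (delta_star delta p w \<in> F) \<noteq> (delta_star delta q w \<in> F)))"

definition two_sided_ideal :: "'s set \<Rightarrow> 's list set \<Rightarrow> bool" where
  "two_sided_ideal S L \<longleftrightarrow> L \<noteq> {} \<and> L \<subseteq> words S \<and>
     L = {u @ v @ x | u v x. u \<in> words S \<and> v \<in> L \<and> x \<in> words S}"

text \<open>The transition semigroup: transformations of Q induced by nonempty words.
  A transformation is represented by its restriction to Q.\<close>

definition trans_semigroup ::
  "'q set \<Rightarrow> 's set \<Rightarrow> ('s \<Rightarrow> 'q \<Rightarrow> 'q) \<Rightarrow> ('q \<Rightarrow> 'q option) set" where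
  "trans_semigroup Q S delta =
     {(\<lambda>q. if q \<in> Q then Some (delta_star delta q w) else None) | w. w \<in> words S \<and> w \<noteq> []}"

text \<open>The DFA W_n.  States {0..<n}, initial 0, final {n-1}.
  Letters are encoded as naturals: a=0, b=1, c=2, d=3, e=4, f=5.\<close>

definition W_states :: "nat \<Rightarrow> nat set" where
  "W_states n = {0..<n}"

definition W_alpha :: "nat \<Rightarrow> nat set" where
  "W_alpha n = (if n = 2 then {0,1} else if n = 3 then {0,1,2} else {0,1,2,3,4,5})"

definition W_delta :: "nat \<Rightarrow> nat \<Rightarrow> nat \<Rightarrow> nat" where
  "W_delta n x q =
    (if n = 2 then
       (if x = 0 then (if q = 0 then 1 else q) else q)
     else if n = 3 then
       (if x = 0 then (if q = 0 then 1 else if q = 1 then 2 else q)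
        else if x = 1 then (if q = 1 then 0 else q)
        else q)
     else
       (if x = 0 then (if 1 \<le> q \<and> q < n - 2 then q + 1 else if q = n - 2 then 1 else q)
        else if x = 1 then (if q = 1 then 2 else if q = 2 then 1 else q)
        else if x = 2 then (if q = n - 2 then 1 else q)
        else if x = 3 then (if q = n - 2 then 0 else q)
        else if x = 4 then (if q \<le> n - 2 then 1 else q)
        else (if q = 1 then n - 1 else q)))"

end

theory Submission
  imports Defs "HOL-Combinatorics.Transposition" "HOL-Library.FuncSet"
begin

(* The transition semigroup of W_n consists exactly of the transformations t of Q_n with
   t(n-1) = n-1 such that either t(0) = 0, or every state other than n-1 is sent to t(0) or
   to n-1.  These transformations are closed under composition and contain all letters.
   Conversely, for n >= 4 the letters a and b generate all permutations of {1,...,n-2};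
   together with the collapses c, d and f they generate every transformation fixing 0 and n-1,
   and every other element of the description is such a transformation, followed by e,
   followed by another such transformation.  Grouping by the value t(0) gives
   n^(n-2) + (n-2) 2^(n-2) + 1 elements.  Minimality and the ideal property are read off the
   same description: n-1 is a sink, and a word leading 0 to n-1 leads every state there. *)

lemma delta_star_append: "delta_star delta q (u @ v) = delta_star delta (delta_star delta q u) v"
  by (induction u arbitrary: q) auto

section \<open>Transformations generated by transpositions and elementary collapses\<close>

lemma maps_generated_by_transpositions_and_updates:
  fixes P :: "('a \<Rightarrow> 'a) \<Rightarrow> bool"
  assumes "finite M" "M \<subseteq> X"
    and P_id: "P id"
    and P_comp: "\<And>f g. P f \<Longrightarrow> P g \<Longrightarrow> P (f \<circ> g)"
    and P_transpose: "\<And>i j. i \<in> M \<Longrightarrow> j \<in> M \<Longrightarrow> P (transpose i j)"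
    and P_update: "\<And>i y. i \<in> M \<Longrightarrow> y \<in> X \<Longrightarrow> P (id(i := y))"
    and "\<And>q. q \<notin> M \<Longrightarrow> t q = q" "t ` M \<subseteq> X"
  shows "P t"
  using assms(7,8)
proof (induction "card {q \<in> M. t q \<noteq> q}" arbitrary: t rule: less_induct)
  case less
  have fewer_moved: "P t'" if "\<And>q. q \<notin> M \<Longrightarrow> t' q = q" "t' ` M \<subseteq> X"
      "{q \<in> M. t' q \<noteq> q} \<subset> {q \<in> M. t q \<noteq> q}" for t'
  proof -
    have "card {q \<in> M. t' q \<noteq> q} < card {q \<in> M. t q \<noteq> q}"
      by (rule psubset_card_mono) (use \<open>finite M\<close> that(3) in auto)
    then show ?thesis using less.hyps that(1,2) by blast
  qed
  show ?case
  proof (cases "\<exists>i\<in>M. t i \<noteq> i")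
    case False
    then have "t = id" using less.prems(1) by fastforce
    then show ?thesis using P_id by simp
  next
    case True
    then obtain i where i: "i \<in> M" "t i \<noteq> i" by blast
    \<comment> \<open>Either the value t i is taken at a second point y, and t factors through the collapse
      of i onto y, or t i is moved by t as well, and composing with the transposition of i and
      t i fixes t i.  Both factorisations move fewer points.\<close>
    show ?thesis
    proof (cases "\<exists>y. y \<noteq> i \<and> t y = t i")
      case True
      then obtain y where y: "y \<noteq> i" "t y = t i" by blast
      have "y \<in> X" using y less.prems \<open>M \<subseteq> X\<close> i(1) by (cases "y \<in> M") auto
      have "t = t(i := i) \<circ> id(i := y)" using y by (auto simp: fun_eq_iff)
      moreover have "P (t(i := i))"
        by (rule fewer_moved) (use less.prems i \<open>M \<subseteq> X\<close> in auto)
      ultimately show ?thesis using P_comp P_update[OF i(1) \<open>y \<in> X\<close>] by metis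
    next
      case False
      define j where "j = t i"
      have "t j \<noteq> j" using False i(2) unfolding j_def by metis
      then have "j \<in> M" using less.prems(1) by blast
      have "t = (t \<circ> transpose i j) \<circ> transpose i j" by (simp add: comp_assoc)
      moreover have "P (t \<circ> transpose i j)"
      proof (rule fewer_moved)
        show "{q \<in> M. (t \<circ> transpose i j) q \<noteq> q} \<subset> {q \<in> M. t q \<noteq> q}"
          using i \<open>j \<in> M\<close> \<open>t j \<noteq> j\<close> by (auto simp: j_def transpose_def)
      qed (use less.prems i \<open>j \<in> M\<close> in \<open>auto simp: transpose_def\<close>)
      ultimately show ?thesis using P_comp P_transpose[OF i(1) \<open>j \<in> M\<close>] by metis
    qed
  qed
qed

lemma transpose_conjugate:
  assumes "\<And>x. \<sigma> (\<tau> x) = x" "\<And>x. \<tau> (\<sigma> x) = x"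
  shows "\<sigma> \<circ> transpose a b \<circ> \<tau> = transpose (\<sigma> a) (\<sigma> b)"
proof
  fix x
  have "\<tau> x = a \<longleftrightarrow> x = \<sigma> a" "\<tau> x = b \<longleftrightarrow> x = \<sigma> b" using assms by metis+
  then show "(\<sigma> \<circ> transpose a b \<circ> \<tau>) x = transpose (\<sigma> a) (\<sigma> b) x"
    using assms by (auto simp: transpose_def)
qed

lemma fun_upd_id_conjugate:
  assumes "\<And>x. \<sigma> (\<tau> x) = x" "\<And>x. \<tau> (\<sigma> x) = x"
  shows "\<sigma> \<circ> id(a := b) \<circ> \<tau> = id(\<sigma> a := \<sigma> b)"
proof
  fix x
  have "\<tau> x = a \<longleftrightarrow> x = \<sigma> a" using assms by metis
  then show "(\<sigma> \<circ> id(a := b) \<circ> \<tau>) x = (id(\<sigma> a := \<sigma> b)) x"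
    using assms by auto
qed

definition cyclic_shift :: "nat \<Rightarrow> nat \<Rightarrow> nat \<Rightarrow> nat" where
  "cyclic_shift m k q = (if 1 \<le> q \<and> q \<le> m then (q - 1 + k) mod m + 1 else q)"

lemma cyclic_shift_Suc: "p < m \<Longrightarrow> cyclic_shift m k (Suc p) = Suc ((p + k) mod m)"
  by (simp add: cyclic_shift_def)

lemma cyclic_shift_outside: "\<not> (1 \<le> q \<and> q \<le> m) \<Longrightarrow> cyclic_shift m k q = q"
  unfolding cyclic_shift_def by auto

lemma cyclic_shift_add: "cyclic_shift m a (cyclic_shift m b q) = cyclic_shift m (a + b) q"
proof (cases "1 \<le> q \<and> q \<le> m")
  case True
  then obtain p where p: "q = Suc p" "p < m" by (cases q) auto
  then have "(p + b) mod m < m" by simp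
  then show ?thesis
    using p by (simp add: cyclic_shift_Suc mod_add_left_eq mod_add_right_eq ac_simps)
qed (simp add: cyclic_shift_outside)

lemma cyclic_shift_period: "cyclic_shift m m q = q"
proof (cases "1 \<le> q \<and> q \<le> m")
  case True
  then obtain p where p: "q = Suc p" "p < m" by (cases q) auto
  then show ?thesis by (simp add: cyclic_shift_Suc)
qed (simp add: cyclic_shift_outside)

lemma cyclic_shift_inverse: "k \<le> m \<Longrightarrow> cyclic_shift m k (cyclic_shift m (m - k) q) = q"
  by (simp add: cyclic_shift_add cyclic_shift_period)

lemma transpose_adjacent_by_cyclic_shift:
  assumes "1 \<le> k" "k < m"
  shows "cyclic_shift m (k - 1) \<circ> transpose 1 2 \<circ> cyclic_shift m (m - (k - 1)) = transpose k (Suc k)"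
proof -
  have "cyclic_shift m (k - 1) 1 = k" "cyclic_shift m (k - 1) 2 = Suc k"
    using assms cyclic_shift_Suc[of 0 m "k - 1"] cyclic_shift_Suc[of 1 m "k - 1"]
    by (simp_all add: numeral_2_eq_2)
  moreover have "cyclic_shift m (m - (k - 1)) (cyclic_shift m (k - 1) x) = x" for x
    using cyclic_shift_inverse[of "m - (k - 1)" m] assms by simp
  ultimately show ?thesis
    using transpose_conjugate[of "cyclic_shift m (k - 1)"] cyclic_shift_inverse[of "k - 1" m] assms
    by (simp add: numeral_2_eq_2)
qed

section \<open>The transformations of W_n\<close>

definition W_transformation :: "nat \<Rightarrow> (nat \<Rightarrow> nat) \<Rightarrow> bool" where
  "W_transformation n t \<longleftrightarrow> (\<forall>q<n. t q < n) \<and> t (n - 1) = n - 1 \<and>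
     (t 0 = 0 \<or> (\<forall>q<n - 1. t q = t 0 \<or> t q = n - 1))"

lemma W_transformation_cong:
  assumes "0 < n" "\<And>q. q < n \<Longrightarrow> s q = t q"
  shows "W_transformation n s \<longleftrightarrow> W_transformation n t"
proof -
  have "s 0 = t 0" "s (n - 1) = t (n - 1)" "\<forall>q<n - 1. s q = t q" using assms by auto
  then show ?thesis using assms(2) unfolding W_transformation_def by (metis (no_types, lifting))
qed

lemma W_transformation_comp:
  assumes "W_transformation n t" "W_transformation n s"
  shows "W_transformation n (t \<circ> s)"
proof -
  have "(t \<circ> s) 0 = 0 \<or> (\<forall>q<n - 1. (t \<circ> s) q = (t \<circ> s) 0 \<or> (t \<circ> s) q = n - 1)"
  proof (cases "s 0 = 0")
    case True
    have "t (s q) = t 0 \<or> t (s q) = n - 1" if "t 0 \<noteq> 0" "q < n - 1" for q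
    proof -
      have "s q < n" using assms(2) that(2) unfolding W_transformation_def by simp
      then have "s q < n - 1 \<or> s q = n - 1" by arith
      then show ?thesis using assms(1) that(1) unfolding W_transformation_def by auto
    qed
    then show ?thesis using True by auto
  next
    case False
    have "(t \<circ> s) q = (t \<circ> s) 0 \<or> (t \<circ> s) q = n - 1" if "q < n - 1" for q
    proof -
      have "s q = s 0 \<or> s q = n - 1" using False assms(2) that unfolding W_transformation_def by auto
      then show ?thesis using assms(1) unfolding W_transformation_def by auto
    qed
    then show ?thesis by blast
  qed
  then show ?thesis using assms unfolding W_transformation_def by simp
qed

lemma W_transformation_letter:
  assumes "2 \<le> n" "x \<in> W_alpha n"
  shows "W_transformation n (W_delta n x)"
proof -
  consider "n = 2" | "n = 3" | "4 \<le> n" using assms(1) by linarith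
  then show ?thesis
  proof cases
    case 1
    then show ?thesis using assms(2) by (auto simp: W_transformation_def W_alpha_def W_delta_def)
  next
    case 2
    then show ?thesis using assms(2) by (auto simp: W_transformation_def W_alpha_def W_delta_def)
  next
    case 3
    then have "x \<in> {0, 1, 2, 3, 4, 5}" using assms(2) by (simp add: W_alpha_def)
    then show ?thesis using 3 by (auto simp: W_transformation_def W_delta_def)
  qed
qed

lemma W_transformation_delta_star:
  assumes "2 \<le> n" "w \<in> lists (W_alpha n)"
  shows "W_transformation n (\<lambda>q. delta_star (W_delta n) q w)"
  using assms(2)
proof (induction w)
  case Nil
  then show ?case unfolding W_transformation_def by simp
next
  case (Cons x w)
  have "W_transformation n ((\<lambda>q. delta_star (W_delta n) q w) \<circ> W_delta n x)"
    using Cons W_transformation_comp W_transformation_letter assms(1) by simp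
  then show ?case by (simp add: comp_def)
qed

lemma W_transformation_sink:
  assumes "W_transformation n t" "t 0 = n - 1" "2 \<le> n" "q < n"
  shows "t q = n - 1"
  using assms unfolding W_transformation_def by (cases "q = n - 1") auto

definition W_realizes :: "nat \<Rightarrow> (nat \<Rightarrow> nat) \<Rightarrow> bool" where
  "W_realizes n t \<longleftrightarrow>
     (\<exists>w\<in>lists (W_alpha n). w \<noteq> [] \<and> (\<forall>q<n. delta_star (W_delta n) q w = t q))"

lemma W_realizes_cong: "W_realizes n s \<Longrightarrow> (\<And>q. q < n \<Longrightarrow> s q = t q) \<Longrightarrow> W_realizes n t"
  unfolding W_realizes_def by auto

lemma W_realizes_letter: "x \<in> W_alpha n \<Longrightarrow> W_realizes n (W_delta n x)"
  unfolding W_realizes_def by (intro bexI[of _ "[x]"]) auto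

lemma W_realizes_comp:
  assumes "2 \<le> n" "W_realizes n f" "W_realizes n g"
  shows "W_realizes n (f \<circ> g)"
proof -
  obtain u where u: "u \<in> lists (W_alpha n)" "u \<noteq> []" "\<forall>q<n. delta_star (W_delta n) q u = f q"
    using assms(2) unfolding W_realizes_def by blast
  obtain v where v: "v \<in> lists (W_alpha n)" "v \<noteq> []" "\<forall>q<n. delta_star (W_delta n) q v = g q"
    using assms(3) unfolding W_realizes_def by blast
  have "delta_star (W_delta n) q v < n" if "q < n" for q
    using W_transformation_delta_star[OF assms(1) v(1)] that unfolding W_transformation_def by blast
  then have "\<forall>q<n. delta_star (W_delta n) q (v @ u) = (f \<circ> g) q"
    using u(3) v(3) by (simp add: delta_star_append)
  then show ?thesis unfolding W_realizes_def using u v by (intro bexI[of _ "v @ u"]) auto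
qed

lemma W_realizes_imp_transformation:
  assumes "2 \<le> n" "W_realizes n t"
  shows "W_transformation n t"
proof -
  obtain w where "w \<in> lists (W_alpha n)" "\<forall>q<n. delta_star (W_delta n) q w = t q"
    using assms(2) unfolding W_realizes_def by blast
  then show ?thesis
    using W_transformation_delta_star[OF assms(1)] assms(1)
      W_transformation_cong[of n "\<lambda>q. delta_star (W_delta n) q w" t] by simp
qed

section \<open>Generation of all these transformations\<close>

lemma W_alpha_large: "4 \<le> n \<Longrightarrow> W_alpha n = {0, 1, 2, 3, 4, 5}"
  unfolding W_alpha_def by simp

lemma W_delta_large:
  assumes "4 \<le> n"
  shows "W_delta n 0 = cyclic_shift (n - 2) 1"
    and "W_delta n 1 = transpose 1 2"
    and "W_delta n 2 = id(n - 2 := 1)"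
    and "W_delta n 3 = id(n - 2 := 0)"
    and "W_delta n 4 = (\<lambda>q. if q \<le> n - 2 then 1 else q)"
    and "W_delta n 5 = id(1 := n - 1)"
proof -
  have W: "W_delta n x q =
       (if x = 0 then (if 1 \<le> q \<and> q < n - 2 then q + 1 else if q = n - 2 then 1 else q)
        else if x = 1 then (if q = 1 then 2 else if q = 2 then 1 else q)
        else if x = 2 then (if q = n - 2 then 1 else q)
        else if x = 3 then (if q = n - 2 then 0 else q)
        else if x = 4 then (if q \<le> n - 2 then 1 else q)
        else (if q = 1 then n - 1 else q))" for x q
    using assms by (simp add: W_delta_def)
  show "W_delta n 0 = cyclic_shift (n - 2) 1"
  proof
    fix q
    consider "1 \<le> q \<and> q < n - 2" | "q = n - 2" | "\<not> (1 \<le> q \<and> q \<le> n - 2)" by linarith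
    then show "W_delta n 0 q = cyclic_shift (n - 2) 1 q"
    proof cases
      case 2
      have "Suc (n - 3) = n - 2" using assms by arith
      then show ?thesis using 2 assms by (simp add: W cyclic_shift_def)
    qed (use assms in \<open>auto simp: W cyclic_shift_def\<close>)
  qed
  show "W_delta n 1 = transpose 1 2" by (auto simp: fun_eq_iff W transpose_def)
  show "W_delta n 2 = id(n - 2 := 1)" by (auto simp: fun_eq_iff W)
  show "W_delta n 3 = id(n - 2 := 0)" by (auto simp: fun_eq_iff W)
  show "W_delta n 4 = (\<lambda>q. if q \<le> n - 2 then 1 else q)" by (auto simp: fun_eq_iff W)
  show "W_delta n 5 = id(1 := n - 1)" by (auto simp: fun_eq_iff W)
qed

lemma W_realizes_generators:
  assumes "4 \<le> n"
  shows "W_realizes n (cyclic_shift (n - 2) 1)"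
    and "W_realizes n (transpose 1 2)"
    and "W_realizes n (id(n - 2 := 1))"
    and "W_realizes n (id(n - 2 := 0))"
    and "W_realizes n (\<lambda>q. if q \<le> n - 2 then 1 else q)"
    and "W_realizes n (id(1 := n - 1))"
proof -
  have letter: "W_realizes n (W_delta n x)" if "x \<in> {0, 1, 2, 3, 4, 5}" for x
    using W_realizes_letter W_alpha_large[OF assms] that by metis
  show "W_realizes n (cyclic_shift (n - 2) 1)" using letter[of 0] W_delta_large(1)[OF assms] by simp
  show "W_realizes n (transpose 1 2)" using letter[of 1] W_delta_large(2)[OF assms] by simp
  show "W_realizes n (id(n - 2 := 1))" using letter[of 2] W_delta_large(3)[OF assms] by simp
  show "W_realizes n (id(n - 2 := 0))" using letter[of 3] W_delta_large(4)[OF assms] by simp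
  show "W_realizes n (\<lambda>q. if q \<le> n - 2 then 1 else q)"
    using letter[of 4] W_delta_large(5)[OF assms] by simp
  show "W_realizes n (id(1 := n - 1))" using letter[of 5] W_delta_large(6)[OF assms] by simp
qed

lemma W_realizes_id: "4 \<le> n \<Longrightarrow> W_realizes n id"
  using W_realizes_comp[OF _ W_realizes_generators(2) W_realizes_generators(2)] by simp

lemma W_realizes_cyclic_shift: "4 \<le> n \<Longrightarrow> W_realizes n (cyclic_shift (n - 2) k)"
proof (induction k)
  case 0
  show ?case by (rule W_realizes_cong[OF W_realizes_id[OF 0]]) (auto simp: cyclic_shift_def)
next
  case (Suc k)
  have "W_realizes n (cyclic_shift (n - 2) 1 \<circ> cyclic_shift (n - 2) k)"
    using W_realizes_comp Suc W_realizes_generators(1) by simp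
  then show ?case by (rule W_realizes_cong) (simp add: cyclic_shift_add)
qed

lemma W_realizes_adjacent_transpose:
  assumes "4 \<le> n" "1 \<le> k" "k < n - 2"
  shows "W_realizes n (transpose k (Suc k))"
proof -
  have "W_realizes n
      (cyclic_shift (n - 2) (k - 1) \<circ> transpose 1 2 \<circ> cyclic_shift (n - 2) (n - 2 - (k - 1)))"
    using W_realizes_comp W_realizes_cyclic_shift W_realizes_generators(2) assms(1) by simp
  then show ?thesis using transpose_adjacent_by_cyclic_shift[OF assms(2,3)] by simp
qed

lemma W_realizes_transpose:
  assumes "4 \<le> n" "i \<in> {1..n - 2}" "j \<in> {1..n - 2}"
  shows "W_realizes n (transpose i j)"
proof -
  have ordered: "W_realizes n (transpose i j)" if "1 \<le> i" "i < j" "j \<le> n - 2" for i j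
    using that
  proof (induction j)
    case 0
    then show ?case by simp
  next
    case (Suc j)
    show ?case
    proof (cases "i = j")
      case True
      then show ?thesis using W_realizes_adjacent_transpose[OF assms(1)] Suc.prems by simp
    next
      case False
      then have "W_realizes n (transpose j (Suc j) \<circ> transpose i j \<circ> transpose j (Suc j))"
        using Suc W_realizes_comp W_realizes_adjacent_transpose[OF assms(1), of j] assms(1) by simp
      moreover have "transpose j (Suc j) \<circ> transpose i j \<circ> transpose j (Suc j) = transpose i (Suc j)"
        using transpose_comp_triple[of "Suc j" i j] False Suc.prems by (simp add: transpose_commute)
      ultimately show ?thesis by simp
    qed
  qed
  consider "i < j" | "i = j" | "j < i" by linarith
  then show ?thesis
  proof cases
    case 3
    then have "W_realizes n (transpose j i)" using ordered assms by simp
    then show ?thesis by (simp add: transpose_commute)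
  qed (use ordered assms W_realizes_id in auto)
qed

lemma W_realizes_conjugate_update:
  assumes "4 \<le> n" "u \<in> {1..n - 2}" "v \<in> {1..n - 2}" "W_realizes n (id(a := b))"
  shows "W_realizes n (id(transpose u v a := transpose u v b))"
proof -
  have "W_realizes n (transpose u v \<circ> id(a := b) \<circ> transpose u v)"
    using W_realizes_comp W_realizes_transpose assms by simp
  then show ?thesis using fun_upd_id_conjugate[of "transpose u v" "transpose u v"] by simp
qed

lemma W_realizes_update:
  assumes "4 \<le> n" "i \<in> {1..n - 2}" "y < n"
  shows "W_realizes n (id(i := y))"
proof -
  let ?m = "n - 2"
  have to_last: "W_realizes n (id(?m := z))" if "z \<in> {1..?m}" "z \<noteq> ?m" for z
  proof -
    have "W_realizes n (id(transpose 1 z ?m := transpose 1 z 1))"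
      by (rule W_realizes_conjugate_update) (use assms(1) that W_realizes_generators(3) in auto)
    then show ?thesis using assms(1) that by simp
  qed
  consider "y = i" | "y = 0" | "y = n - 1" | "y \<in> {1..?m}" "y \<noteq> i" using assms by fastforce
  then show ?thesis
  proof cases
    case 1
    have "id(i := i) = id" by (simp add: fun_eq_iff)
    then show ?thesis using 1 W_realizes_id[OF assms(1)] by simp
  next
    case 2
    have "W_realizes n (id(transpose i ?m ?m := transpose i ?m 0))"
      by (rule W_realizes_conjugate_update) (use assms W_realizes_generators(4) in auto)
    then show ?thesis using 2 assms by simp
  next
    case 3
    have "W_realizes n (id(transpose i 1 1 := transpose i 1 (n - 1)))"
      by (rule W_realizes_conjugate_update) (use assms W_realizes_generators(6) in auto)
    moreover have "transpose i 1 (n - 1) = n - 1"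
      by (rule transpose_apply_other) (use assms in auto)
    ultimately show ?thesis using 3 by simp
  next
    case 4
    define z where "z = transpose i ?m y"
    have "z \<in> {1..?m}" "z \<noteq> ?m" using 4 assms(2) by (auto simp: z_def transpose_def)
    then have "W_realizes n (id(transpose i ?m ?m := transpose i ?m z))"
      by (intro W_realizes_conjugate_update to_last) (use assms in auto)
    then show ?thesis by (simp add: z_def)
  qed
qed

lemma W_realizes_fixing_initial:
  assumes "4 \<le> n" "W_transformation n t" "t 0 = 0"
  shows "W_realizes n t"
proof -
  let ?M = "{1..n - 2}"
  define t' where "t' q = (if q \<in> ?M then t q else q)" for q
  have "W_realizes n t'"
  proof (rule maps_generated_by_transpositions_and_updates[where P = "W_realizes n" and t = t'
        and M = ?M and X = "{..<n}"])
    show "t' ` ?M \<subseteq> {..<n}"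
      using assms(1,2) unfolding t'_def W_transformation_def by auto
  qed (use assms(1) W_realizes_id W_realizes_comp W_realizes_transpose W_realizes_update
      in \<open>auto simp: t'_def\<close>)
  then show ?thesis
  proof (rule W_realizes_cong)
    fix q assume "q < n"
    then have "q \<in> ?M \<or> q = 0 \<or> q = n - 1" by auto
    then show "t' q = t q" using assms(2,3) unfolding t'_def W_transformation_def by auto
  qed
qed

lemma W_realizes_large:
  assumes "4 \<le> n" "W_transformation n t"
  shows "W_realizes n t"
proof (cases "t 0 = 0")
  case True
  then show ?thesis using W_realizes_fixing_initial assms by blast
next
  case False
  \<comment> \<open>h sends to n-1 the states that t sends there, e collapses all other states onto 1,
    and g moves 1 to t 0.\<close>
  let ?e = "\<lambda>q. if q \<le> n - 2 then 1 else q"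
  define g where "g = id(1 := t 0)"
  define h where "h q = (if q \<noteq> 0 \<and> t q = n - 1 then n - 1 else q)" for q
  have "W_realizes n g" "W_realizes n h"
    using assms by (auto intro!: W_realizes_fixing_initial simp: W_transformation_def g_def h_def)
  then have "W_realizes n (g \<circ> ?e \<circ> h)"
    using W_realizes_comp W_realizes_generators(5) assms(1) by simp
  then show ?thesis
  proof (rule W_realizes_cong)
    fix q assume "q < n"
    then consider "q = n - 1" | "q < n - 1" "q \<noteq> 0" "t q = n - 1"
      | "q < n - 1" "q = 0 \<or> t q \<noteq> n - 1"
      by linarith
    then show "(g \<circ> ?e \<circ> h) q = t q"
    proof cases
      case 3
      then have "t q = t 0" using assms(2) False unfolding W_transformation_def by auto
      then show ?thesis using 3 assms(1) by (auto simp: g_def h_def)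
    qed (use assms in \<open>auto simp: W_transformation_def g_def h_def\<close>)
  qed
qed

lemma W_realizes_2:
  assumes "W_transformation 2 t"
  shows "W_realizes 2 t"
proof -
  have states: "q < 2 \<longleftrightarrow> q \<in> {0, 1}" for q :: nat by auto
  have "t 0 \<in> {0, 1}" "t 1 = 1"
    using assms unfolding W_transformation_def states by auto
  then have "\<exists>w\<in>{[1], [0]}. \<forall>q\<in>{0, 1}. delta_star (W_delta 2) q w = t q"
    by (auto simp: W_delta_def)
  then obtain w where "w \<in> {[1], [0]}" "\<forall>q\<in>{0, 1}. delta_star (W_delta 2) q w = t q"
    by blast
  then show ?thesis unfolding W_realizes_def W_alpha_def states by (intro bexI[of _ w]) auto
qed

lemma W_realizes_3:
  assumes "W_transformation 3 t"
  shows "W_realizes 3 t"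
proof -
  have states: "q < 3 \<longleftrightarrow> q \<in> {0, 1, 2}" for q :: nat by auto
  have "t 0 < 3" "t 1 < 3" "t 2 = 2" "t 0 = 0 \<or> (\<forall>q<2. t q = t 0 \<or> t q = 2)"
    using assms unfolding W_transformation_def by simp_all
  then have "(t 0, t 1) \<in> {(0, 0), (0, 1), (0, 2), (1, 1), (1, 2), (2, 2)}"
    unfolding states less_2_cases_iff by auto
  then have "\<exists>w\<in>{[1], [2], [0, 1], [1, 0], [0], [0, 0]}.
      \<forall>q\<in>{0, 1}. delta_star (W_delta 3) q w = t q"
    by (auto simp: W_delta_def)
  then obtain w where "w \<in> {[1], [2], [0, 1], [1, 0], [0], [0, 0]}"
      "\<forall>q\<in>{0, 1}. delta_star (W_delta 3) q w = t q"
    by blast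
  then show ?thesis unfolding W_realizes_def W_alpha_def states
    using \<open>t 2 = 2\<close> by (intro bexI[of _ w]) (auto simp: W_delta_def)
qed

theorem W_realizes_iff_transformation:
  assumes "2 \<le> n"
  shows "W_realizes n t \<longleftrightarrow> W_transformation n t"
proof
  assume t: "W_transformation n t"
  consider "n = 2" | "n = 3" | "4 \<le> n" using assms by linarith
  then show "W_realizes n t"
    by cases (use t W_realizes_2 W_realizes_3 W_realizes_large in auto)
qed (use W_realizes_imp_transformation assms in blast)

lemma W_transformation_obtain_word:
  assumes "2 \<le> n" "W_transformation n t"
  obtains w where "w \<in> lists (W_alpha n)" "\<forall>q<n. delta_star (W_delta n) q w = t q"
proof -
  have "W_realizes n t" using W_realizes_iff_transformation[OF assms(1), of t] assms(2) by simp
  then show ?thesis using that unfolding W_realizes_def by blast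
qed

section \<open>Counting\<close>

definition W_allowed :: "nat \<Rightarrow> nat \<Rightarrow> nat \<Rightarrow> nat set" where
  "W_allowed n a q =
     (if q = 0 then {a} else if q = n - 1 then {n - 1} else if a = 0 then {..<n} else {a, n - 1})"

lemma W_transformation_iff_allowed:
  assumes "2 \<le> n"
  shows "W_transformation n t \<longleftrightarrow> t 0 < n \<and> (\<forall>q<n. t q \<in> W_allowed n (t 0) q)"
proof
  assume t: "W_transformation n t"
  have "t q \<in> W_allowed n (t 0) q" if q: "q < n" for q
  proof -
    consider "q = 0" | "q = n - 1" | "q \<noteq> 0" "q < n - 1" using q by linarith
    then show ?thesis
    proof cases
      case 2
      then show ?thesis using t assms unfolding W_allowed_def W_transformation_def by simp
    next
      case 3
      have "t q < n" using t q unfolding W_transformation_def by blast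
      moreover have "t 0 = 0 \<or> t q = t 0 \<or> t q = n - 1"
        using t 3(2) unfolding W_transformation_def by blast
      ultimately show ?thesis using 3 unfolding W_allowed_def by auto
    qed (simp add: W_allowed_def)
  qed
  moreover have "t 0 < n" using t assms unfolding W_transformation_def by simp
  ultimately show "t 0 < n \<and> (\<forall>q<n. t q \<in> W_allowed n (t 0) q)" by blast
next
  assume t: "t 0 < n \<and> (\<forall>q<n. t q \<in> W_allowed n (t 0) q)"
  then have allowed: "t q \<in> W_allowed n (t 0) q" if "q < n" for q
    using that by blast
  have "W_allowed n (t 0) q \<subseteq> {..<n}" for q
    using t unfolding W_allowed_def by auto
  then have "t q < n" if "q < n" for q
    using allowed[OF that] by blast
  moreover have "t (n - 1) = n - 1"
    using allowed[of "n - 1"] assms unfolding W_allowed_def by simp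
  moreover have "t q = t 0 \<or> t q = n - 1" if "t 0 \<noteq> 0" "q < n - 1" for q
    using allowed[of q] that unfolding W_allowed_def by (cases "q = 0") auto
  ultimately show "W_transformation n t" unfolding W_transformation_def by blast
qed

lemma prod_card_W_allowed:
  assumes "2 \<le> n"
  shows "(\<Prod>q<n. card (W_allowed n a q)) = card (if a = 0 then {..<n} else {a, n - 1}) ^ (n - 2)"
proof -
  have "(\<Prod>q<n. card (W_allowed n a q)) = (\<Prod>q\<in>{1..<n - 1}. card (W_allowed n a q))"
    by (rule prod.mono_neutral_right) (auto simp: W_allowed_def)
  also have "\<dots> = (\<Prod>q\<in>{1..<n - 1}. card (if a = 0 then {..<n} else {a, n - 1}))"
    by (rule prod.cong) (auto simp: W_allowed_def)
  also have "\<dots> = card (if a = 0 then {..<n} else {a, n - 1}) ^ card {1..<n - 1}"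
    by (rule prod_constant)
  also have "card {1..<n - 1} = n - 2" by simp
  finally show ?thesis .
qed

definition W_tables :: "nat \<Rightarrow> (nat \<Rightarrow> nat) set" where
  "W_tables n = (\<Union>a<n. PiE {..<n} (W_allowed n a))"

lemma W_allowed_initial: "0 < n \<Longrightarrow> f \<in> PiE {..<n} (W_allowed n a) \<Longrightarrow> f 0 = a"
  using PiE_mem[of f "{..<n}" "W_allowed n a" 0] by (simp add: W_allowed_def)

lemma card_W_tables:
  assumes "2 \<le> n"
  shows "card (W_tables n) = n ^ (n - 2) + (n - 2) * 2 ^ (n - 2) + 1"
proof -
  obtain k where n: "n = Suc (Suc k)" using assms by (metis add_2_eq_Suc le_Suc_ex)
  define c where "c a = card (if a = 0 then {..<n} else {a, n - 1}) ^ (n - 2)" for a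
  have finite: "finite (PiE {..<n} (W_allowed n a))" for a
    by (rule finite_PiE) (auto simp: W_allowed_def)
  have disjoint: "PiE {..<n} (W_allowed n a) \<inter> PiE {..<n} (W_allowed n b) = {}" if "a \<noteq> b" for a b
    using W_allowed_initial[of n _ a] W_allowed_initial[of n _ b] that assms by auto
  have "card (W_tables n) = (\<Sum>a<n. card (PiE {..<n} (W_allowed n a)))"
    unfolding W_tables_def by (rule card_UN_disjoint) (use finite disjoint in auto)
  also have "\<dots> = (\<Sum>a<n. c a)"
    by (rule sum.cong) (simp_all add: card_PiE prod_card_W_allowed assms c_def)
  also have "\<dots> = (\<Sum>a<Suc k. c a) + c (Suc k)"
    unfolding n by (rule sum.lessThan_Suc)
  also have "(\<Sum>a<Suc k. c a) = c 0 + (\<Sum>a<k. c (Suc a))"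
    by (rule sum.lessThan_Suc_shift)
  also have "(\<Sum>a<k. c (Suc a)) = (\<Sum>a<k. 2 ^ k)"
    by (rule sum.cong) (auto simp: c_def n numeral_2_eq_2)
  finally show ?thesis by (simp add: c_def n)
qed

definition opt_restrict :: "nat \<Rightarrow> (nat \<Rightarrow> nat) \<Rightarrow> nat \<Rightarrow> nat option" where
  "opt_restrict n t = (\<lambda>q. if q < n then Some (t q) else None)"

lemma opt_restrict_eq_iff: "opt_restrict n s = opt_restrict n t \<longleftrightarrow> (\<forall>q<n. s q = t q)"
  unfolding opt_restrict_def fun_eq_iff by (metis option.inject)

lemma opt_restrict_image_eq:
  assumes "\<And>s. s \<in> A \<Longrightarrow> \<exists>t\<in>B. \<forall>q<n. s q = t q"
    and "\<And>t. t \<in> B \<Longrightarrow> \<exists>s\<in>A. \<forall>q<n. s q = t q"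
  shows "opt_restrict n ` A = opt_restrict n ` B"
proof (intro equalityI subsetI)
  fix f assume "f \<in> opt_restrict n ` A"
  then obtain s t where "s \<in> A" "f = opt_restrict n s" "t \<in> B" "\<forall>q<n. s q = t q"
    using assms(1) by blast
  then show "f \<in> opt_restrict n ` B" by (metis image_eqI opt_restrict_eq_iff)
next
  fix f assume "f \<in> opt_restrict n ` B"
  then obtain s t where "t \<in> B" "f = opt_restrict n t" "s \<in> A" "\<forall>q<n. s q = t q"
    using assms(2) by blast
  then show "f \<in> opt_restrict n ` A" by (metis image_eqI opt_restrict_eq_iff)
qed

lemma trans_semigroup_W:
  assumes "2 \<le> n"
  shows "trans_semigroup (W_states n) (W_alpha n) (W_delta n) =
    opt_restrict n ` W_tables n"
proof -
  let ?induced = "\<lambda>w q. delta_star (W_delta n) q w"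
  have "trans_semigroup (W_states n) (W_alpha n) (W_delta n) =
      (opt_restrict n \<circ> ?induced) ` {w \<in> lists (W_alpha n). w \<noteq> []}"
    unfolding trans_semigroup_def setcompr_eq_image words_def
    by (rule image_cong) (auto simp: opt_restrict_def W_states_def)
  also have "\<dots> = opt_restrict n ` {t. W_realizes n t}"
    unfolding image_comp[symmetric]
    by (rule opt_restrict_image_eq) (auto simp: W_realizes_def)
  also have "\<dots> = opt_restrict n ` {t. W_transformation n t}"
    by (simp add: W_realizes_iff_transformation[OF assms])
  also have "\<dots> = opt_restrict n ` W_tables n"
    unfolding W_tables_def
  proof (rule opt_restrict_image_eq)
    fix t assume "t \<in> {t. W_transformation n t}"
    then have "restrict t {..<n} \<in> PiE {..<n} (W_allowed n (t 0))" "t 0 < n"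
      using W_transformation_iff_allowed[OF assms] by auto
    then show "\<exists>s\<in>\<Union>a<n. PiE {..<n} (W_allowed n a). \<forall>q<n. t q = s q"
      by (intro bexI[of _ "restrict t {..<n}"]) auto
  next
    fix s assume "s \<in> (\<Union>a<n. PiE {..<n} (W_allowed n a))"
    then obtain a where "a < n" "s \<in> PiE {..<n} (W_allowed n a)" by blast
    moreover from this have "s 0 = a" using W_allowed_initial[of n s a] assms by simp
    ultimately have "W_transformation n s"
      using W_transformation_iff_allowed[OF assms] by (auto simp: PiE_iff)
    then show "\<exists>t\<in>{t. W_transformation n t}. \<forall>q<n. t q = s q" by blast
  qed
  finally show ?thesis .
qed

lemma card_trans_semigroup_W:
  assumes "2 \<le> n"
  shows "card (trans_semigroup (W_states n) (W_alpha n) (W_delta n)) =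
    n ^ (n - 2) + (n - 2) * 2 ^ (n - 2) + 1"
proof -
  have "inj_on (opt_restrict n) (W_tables n)"
  proof (rule inj_onI)
    fix s t assume "s \<in> W_tables n" "t \<in> W_tables n" "opt_restrict n s = opt_restrict n t"
    then show "s = t"
      unfolding W_tables_def
      by (intro extensionalityI[of s "{..<n}" t]) (auto simp: PiE_iff opt_restrict_eq_iff)
  qed
  then show ?thesis
    using trans_semigroup_W[OF assms] card_W_tables[OF assms] card_image by metis
qed

section \<open>Minimality and the ideal property\<close>

lemma W_minimal:
  assumes "2 \<le> n"
  shows "dfa_minimal (W_states n) (W_alpha n) (W_delta n) 0 {n - 1}"
  unfolding dfa_minimal_def words_def W_states_def
proof (intro conjI ballI impI)
  fix q assume "q \<in> {0..<n}"
  then have "W_transformation n (\<lambda>p. if p < n - 1 then q else n - 1)"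
    unfolding W_transformation_def by auto
  then obtain w where "w \<in> lists (W_alpha n)"
      "\<forall>p<n. delta_star (W_delta n) p w = (if p < n - 1 then q else n - 1)"
    by (rule W_transformation_obtain_word[OF assms])
  moreover have "delta_star (W_delta n) 0 w = q"
    using calculation(2)[rule_format, of 0] assms by simp
  ultimately show "\<exists>w\<in>lists (W_alpha n). delta_star (W_delta n) 0 w = q" by blast
next
  fix p q assume pq: "p \<in> {0..<n}" "q \<in> {0..<n}" "p \<noteq> q"
  show "\<exists>w\<in>lists (W_alpha n).
      (delta_star (W_delta n) p w \<in> {n - 1}) \<noteq> (delta_star (W_delta n) q w \<in> {n - 1})"
  proof (cases "p = n - 1 \<or> q = n - 1")
    case True
    then show ?thesis using pq by (intro bexI[of _ "[]"]) auto
  next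
    case False
    then have "p < n - 1" "q < n - 1" using pq by auto
    have separate: "\<exists>w\<in>lists (W_alpha n).
        (delta_star (W_delta n) r w \<in> {n - 1}) \<noteq> (delta_star (W_delta n) s w \<in> {n - 1})"
      if "r \<noteq> 0" "r < n - 1" "s < n - 1" "r \<noteq> s" for r s
    proof -
      have "W_transformation n (id(r := n - 1))"
        unfolding W_transformation_def using that by auto
      then obtain w where "w \<in> lists (W_alpha n)" "\<forall>x<n. delta_star (W_delta n) x w = (id(r := n - 1)) x"
        by (rule W_transformation_obtain_word[OF assms])
      then show ?thesis using that by (intro bexI[of _ w]) auto
    qed
    show ?thesis
    proof (cases "p = 0")
      case True
      then show ?thesis using separate[of q p] \<open>q < n - 1\<close> \<open>p < n - 1\<close> pq(3) by metis
    next
      case False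
      then show ?thesis using separate[of p q] \<open>q < n - 1\<close> \<open>p < n - 1\<close> pq(3) by metis
    qed
  qed
qed

lemma W_accepted_absorbing:
  assumes "2 \<le> n" "u \<in> lists (W_alpha n)" "v \<in> dfa_lang (W_alpha n) (W_delta n) 0 {n - 1}"
    "x \<in> lists (W_alpha n)"
  shows "u @ v @ x \<in> dfa_lang (W_alpha n) (W_delta n) 0 {n - 1}"
proof -
  let ?d = "delta_star (W_delta n)"
  have v: "v \<in> lists (W_alpha n)" "?d 0 v = n - 1"
    using assms(3) unfolding dfa_lang_def words_def by auto
  have "?d 0 u < n"
    using W_transformation_delta_star[OF assms(1,2)] assms(1) unfolding W_transformation_def by simp
  then have "?d (?d 0 u) v = n - 1"
    using W_transformation_sink[OF W_transformation_delta_star[OF assms(1) v(1)]] v(2) assms(1) by simp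
  moreover have "?d (n - 1) x = n - 1"
    using W_transformation_delta_star[OF assms(1,4)] unfolding W_transformation_def by simp
  ultimately have "?d 0 (u @ v @ x) = n - 1" by (simp add: delta_star_append)
  then show ?thesis using assms(2,4) v(1) unfolding dfa_lang_def words_def by simp
qed

lemma W_two_sided_ideal:
  assumes "2 \<le> n"
  shows "two_sided_ideal (W_alpha n) (dfa_lang (W_alpha n) (W_delta n) 0 {n - 1})"
  unfolding two_sided_ideal_def
proof (intro conjI)
  let ?L = "dfa_lang (W_alpha n) (W_delta n) 0 {n - 1}"
  have "W_transformation n (\<lambda>q. n - 1)" unfolding W_transformation_def by simp
  then obtain w where "w \<in> lists (W_alpha n)" "\<forall>q<n. delta_star (W_delta n) q w = n - 1"
    by (rule W_transformation_obtain_word[OF assms])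
  then have "w \<in> ?L" unfolding dfa_lang_def words_def using assms by simp
  then show "?L \<noteq> {}" by blast
  show "?L \<subseteq> words (W_alpha n)" unfolding dfa_lang_def by blast
  show "?L = {u @ v @ x |u v x. u \<in> words (W_alpha n) \<and> v \<in> ?L \<and> x \<in> words (W_alpha n)}"
  proof
    show "?L \<subseteq> {u @ v @ x |u v x. u \<in> words (W_alpha n) \<and> v \<in> ?L \<and> x \<in> words (W_alpha n)}"
    proof
      fix w assume "w \<in> ?L"
      moreover have "w = [] @ w @ []" "[] \<in> words (W_alpha n)" by (simp_all add: words_def)
      ultimately show "w \<in> {u @ v @ x |u v x. u \<in> words (W_alpha n) \<and> v \<in> ?L \<and> x \<in> words (W_alpha n)}"
        by blast
    qed
  qed (unfold words_def, use W_accepted_absorbing[OF assms] in blast)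
qed

theorem lemma6:
  fixes n :: nat
  assumes "n \<ge> 2"
  shows "dfa_minimal (W_states n) (W_alpha n) (W_delta n) 0 {n - 1}
       \<and> two_sided_ideal (W_alpha n) (dfa_lang (W_alpha n) (W_delta n) 0 {n - 1})
       \<and> card (trans_semigroup (W_states n) (W_alpha n) (W_delta n))
           = n ^ (n - 2) + (n - 2) * 2 ^ (n - 2) + 1"
  using W_minimal W_two_sided_ideal card_trans_semigroup_W assms by blast

end
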